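(* Let $Y \sim N(\theta, \sigma^2)$ with $\sigma^2>0$ known and $\theta\in\mathbb{R}$ unknown, and let the selection function be $p(y) = \mathbf{1}(y>t)$ for some fixed $t\in\mathbb{R}$, so that the selection event is $S=\{Y>t\}$ and the selection probability is $\varphi(\theta) = \mathbb{P}_\theta(Y>t) = \Phi\{(\theta-t)/\sigma\}$. For $y\in\mathbb{R}$ let \[ \Pi(\theta\mid y) = \frac{\int_{-\infty}^\theta \phi\{\sigma^{-1}(\tilde{\theta} - y) \}\, \varphi(\tilde\theta)^{-1} \,\mathrm{d}\tilde\theta}{\int_{-\infty}^\infty \phi\{\sigma^{-1}(\tilde{\theta} - y) \}\, \varphi(\tilde\theta)^{-1}\, \mathrm{d}\tilde\theta} \] be the selective posterior distribution function of $\theta$ based on the uniform prior $\pi(\theta)\propto 1$, and let $\Pi^{-1}(\alpha\mid y)$ denote its $\alpha$-quantile (inverse in $\theta$). Then \[ \mathbb{P}_{\theta_0}\{\theta_0 \leq \Pi^{-1}(\alpha\mid Y)\mid S\} < \alpha \quad \text{for all } (\alpha, \theta_0) \in (0,1)\times \mathbb{R}, \] where the probability is computed under the conditional distribution of $Y\sim N(\theta_0,\sigma^2)$ given $Y>t$.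
   Context: $\phi$ and $\Phi$ denote the standard normal density and distribution function respectively. The selective posterior is obtained by attaching the prior to the selective likelihood, i.e. the density of $Y$ conditional on selection, $f(y\mid S;\theta)=f(y;\theta)p(y)/\varphi(\theta)$, where $\varphi(\theta)=\mathbb{E}_\theta[p(Y)]$ is the probability of selection under parameter $\theta$. *)

theory Defs
  imports "HOL-Probability.Probability"
begin

definition std_normal_cdf :: "real \<Rightarrow> real" where
  "std_normal_cdf x = measure (density lborel std_normal_density) {..x}"

definition sel_prob :: "real \<Rightarrow> real \<Rightarrow> real \<Rightarrow> real" where
  "sel_prob \<sigma> t \<theta> = std_normal_cdf ((\<theta> - t) / \<sigma>)"

definition sel_post_cdf :: "real \<Rightarrow> real \<Rightarrow> real \<Rightarrow> real \<Rightarrow> real" where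
  "sel_post_cdf \<sigma> t y \<theta> =
     (LBINT s:{..\<theta>}. std_normal_density ((s - y) / \<sigma>) / sel_prob \<sigma> t s) /
     (LBINT s. std_normal_density ((s - y) / \<sigma>) / sel_prob \<sigma> t s)"

definition sel_post_quantile :: "real \<Rightarrow> real \<Rightarrow> real \<Rightarrow> real \<Rightarrow> real" where
  "sel_post_quantile \<sigma> t \<alpha> y = Inf {\<theta>. \<alpha> \<le> sel_post_cdf \<sigma> t y \<theta>}"

end

theory Submission
  imports Defs "HOL-Real_Asymp.Real_Asymp"
begin

text \<open>
  Put \<open>e = (y - t) / \<sigma> > 0\<close> and \<open>v = (\<theta>\<^sub>0 - y) / \<sigma>\<close>. Then
  \<open>\<Pi>(\<theta>\<^sub>0 | y) = N\<^sub>e(v) / N\<^sub>e(\<infinity>)\<close>, where \<open>N\<^sub>e(v)\<close> is the integral of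
  \<open>\<phi>(u) / \<Phi>(u + e)\<close> over \<open>u \<le> v\<close>, while \<open>v + e = (\<theta>\<^sub>0 - t) / \<sigma>\<close> does not
  depend on \<open>y\<close>, so that \<open>\<Phi>(v) / \<Phi>(v + e) = P(Y \<ge> y | Y > t)\<close>. The key inequality is
  \<open>\<Phi>(v) / \<Phi>(v + e) < N\<^sub>e(v) / N\<^sub>e(\<infinity>)\<close>: the difference of the two sides vanishes at
  \<open>\<plusminus>\<infinity>\<close> and its derivative changes sign only once, a consequence of the strict
  log-convexity of the ratio \<open>\<Phi> / \<phi>\<close>. So \<open>\<Pi>(\<theta>\<^sub>0 | y) > \<alpha>\<close>, i.e. the posterior
  \<open>\<alpha>\<close>-quantile lies below \<open>\<theta>\<^sub>0\<close>, whenever \<open>y\<close> is below the conditional upper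
  \<open>\<alpha>\<close>-quantile \<open>c\<close> of \<open>Y\<close>, and by continuity also slightly beyond \<open>c\<close>. The
  event \<open>\<theta>\<^sub>0 \<le> \<Pi>\<^sup>-\<^sup>1(\<alpha> | Y)\<close> is therefore contained in \<open>{Y \<ge> b}\<close> for some \<open>b > c\<close>,
  whose conditional probability is less than \<open>\<alpha>\<close>.
\<close>

abbreviation "phi \<equiv> std_normal_density"
abbreviation "Phi \<equiv> std_normal_cdf"

lemma set_integrable_exp_atMost:
  fixes a b :: real
  assumes "0 < a"
  shows "set_integrable lborel {..b} (\<lambda>x. exp (a * x))"
proof -
  have "(\<lambda>x. exp (- a * x)) absolutely_integrable_on {-b..}"
    by (rule nonnegative_absolutely_integrable_1[OF integrable_on_exp_minus_to_infinity[OF assms]])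
       auto
  then have "set_integrable lborel {-b..} (\<lambda>x. exp (- a * x))"
    unfolding absolutely_integrable_on_def set_integrable_def
    by (subst (asm) integrable_completion) auto
  then have "integrable lborel (\<lambda>x. indicator {-b..} (0 + (-1) * x) *\<^sub>R exp (- a * (0 + (-1) * x)))"
    unfolding set_integrable_def by (intro lborel_integrable_real_affine) auto
  then show ?thesis
    unfolding set_integrable_def
    by (rule Bochner_Integration.integrable_cong[THEN iffD1, rotated 2])
       (auto split: split_indicator)
qed

lemma has_real_derivative_set_integral_atMost:
  fixes f :: "real \<Rightarrow> real"
  assumes f: "integrable lborel f" and cont: "\<And>x. isCont f x"
  shows "((\<lambda>v. LBINT u:{..v}. f u) has_real_derivative f x) (at x)"
proof -
  define a b where "a = x - 1" and "b = x + 1"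
  have integrable_on: "set_integrable lborel A f" if "A \<in> sets borel" for A
    using integrable_mult_indicator[OF _ f] that unfolding set_integrable_def by simp
  have split: "(LBINT u:{..v}. f u) = (LBINT u:{..a}. f u) + (LBINT u=a..v. f u)"
    if "a < v" for v
  proof -
    have "{..v} = {..a} \<union> {a<..v}" using that by auto
    then have "(LBINT u:{..v}. f u) = (LBINT u:{..a}. f u) + (LBINT u:{a<..v}. f u)"
      by (simp only:) (rule set_integral_Un, auto intro: integrable_on)
    then show ?thesis using that by (simp add: interval_integral_Ioc)
  qed
  have "((\<lambda>v. LBINT u=a..v. f u) has_vector_derivative f x) (at x within {a..b})"
    by (rule interval_integral_FTC2)
       (auto simp: a_def b_def intro!: continuous_at_imp_continuous_on cont)
  then have "((\<lambda>v. (LBINT u:{..a}. f u) + (LBINT u=a..v. f u)) has_real_derivative f x) (at x)"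
    by (auto simp: at_within_Icc_at a_def b_def has_real_derivative_iff_has_vector_derivative
             intro!: derivative_eq_intros)
  then show ?thesis
    by (rule has_field_derivative_transform_within_open[where S = "{a<..<b}"])
       (auto simp: a_def b_def split)
qed

lemma
  fixes f :: "real \<Rightarrow> real"
  assumes f: "integrable lborel f"
  shows tendsto_set_integral_atMost_at_top:
      "((\<lambda>v. LBINT u:{..v}. f u) \<longlongrightarrow> (LBINT u. f u)) at_top"
    and tendsto_set_integral_atMost_at_bot:
      "((\<lambda>v. LBINT u:{..v}. f u) \<longlongrightarrow> 0) at_bot"
proof -
  show "((\<lambda>v. LBINT u:{..v}. f u) \<longlongrightarrow> (LBINT u. f u)) at_top"
    unfolding set_lebesgue_integral_def
  proof (rule integral_dominated_convergence_at_top[where w = "\<lambda>u. norm (f u)"])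
    show "AE u in lborel. ((\<lambda>v. indicator {..v} u *\<^sub>R f u) \<longlongrightarrow> f u) at_top"
    proof (rule AE_I2, rule tendsto_eventually)
      show "\<forall>\<^sub>F v in at_top. indicator {..v} u *\<^sub>R f u = f u" for u :: real
        using eventually_ge_at_top[of u] by eventually_elim auto
    qed
  qed (use f in \<open>auto simp: indicator_def\<close>)
  have "((\<lambda>v. LBINT u:{..-v}. f u) \<longlongrightarrow> 0) at_top"
    unfolding set_lebesgue_integral_def
  proof (rule integral_dominated_convergence_at_top[where w = "\<lambda>u. norm (f u)" and f = "\<lambda>_. 0",
        simplified])
    show "AE u in lborel. ((\<lambda>v. indicator {..-v} u *\<^sub>R f u) \<longlongrightarrow> 0) at_top"
    proof (rule AE_I2, rule tendsto_eventually)
      show "\<forall>\<^sub>F v in at_top. indicator {..-v} u *\<^sub>R f u = 0" for u :: real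
        using eventually_gt_at_top[of "- u"] by eventually_elim auto
    qed
  qed (use f in \<open>auto simp: indicator_def\<close>)
  then show "((\<lambda>v. LBINT u:{..v}. f u) \<longlongrightarrow> 0) at_bot"
    by (simp add: filterlim_at_bot_mirror)
qed

lemma tendsto_set_integral_atMost_dominated:
  fixes f :: "nat \<Rightarrow> real \<Rightarrow> real"
  assumes [measurable]: "\<And>n. f n \<in> borel_measurable borel" "g \<in> borel_measurable borel"
    and w: "integrable lborel w" and bound: "\<And>n u. \<bar>f n u\<bar> \<le> w u"
    and lim: "\<And>u. (\<lambda>n. f n u) \<longlonglongrightarrow> g u" and V: "V \<longlonglongrightarrow> v"
  shows "(\<lambda>n. LBINT u:{..V n}. f n u) \<longlonglongrightarrow> (LBINT u:{..v}. g u)"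
  unfolding set_lebesgue_integral_def
proof (rule integral_dominated_convergence[where w = w])
  show "AE u in lborel. (\<lambda>n. indicator {..V n} u *\<^sub>R f n u) \<longlonglongrightarrow> indicator {..v} u *\<^sub>R g u"
    using AE_lborel_singleton[of v]
  proof eventually_elim
    case (elim u)
    then consider "u < v" | "v < u" by linarith
    then show ?case
    proof cases
      case 1
      have "\<forall>\<^sub>F n in sequentially. indicator {..V n} u *\<^sub>R f n u = f n u"
        using order_tendstoD(1)[OF V 1] by eventually_elim auto
      then show ?thesis
        using Lim_transform_eventually[OF lim] 1 by (simp add: eventually_mono)
    next
      case 2
      have "\<forall>\<^sub>F n in sequentially. indicator {..V n} u *\<^sub>R f n u = 0"
        using order_tendstoD(2)[OF V 2] by eventually_elim auto
      then show ?thesis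
        using 2 by (simp add: tendsto_eventually)
    qed
  qed
  show "AE u in lborel. norm (indicator {..V n} u *\<^sub>R f n u) \<le> w u" for n
    using bound[of n] order_trans[OF _ bound[of n]] by (intro AE_I2) (auto simp: indicator_def)
qed (use w in auto)

lemma pos_if_tendsto_0_and_deriv_single_crossing:
  fixes F d :: "real \<Rightarrow> real"
  assumes deriv: "\<And>x. (F has_real_derivative d x) (at x)"
    and crossing: "\<And>x y. x < y \<Longrightarrow> d x \<le> 0 \<Longrightarrow> d y < 0"
    and bot: "(F \<longlongrightarrow> 0) at_bot" and top: "(F \<longlongrightarrow> 0) at_top"
  shows "0 < F v"
proof (cases "0 < d v")
  case True
  show ?thesis
  proof (rule DERIV_pos_imp_increasing_at_bot[OF _ bot])
    fix x assume "x \<le> v"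
    then have "0 < d x"
      using True crossing[of x v] by (metis le_less not_le)
    then show "\<exists>y. (F has_real_derivative y) (at x) \<and> 0 < y"
      using deriv by blast
  qed
next
  case False
  then have neg: "d x < 0" if "v < x" for x
    using crossing that by simp
  have "0 < F (v + 1)"
  proof (rule DERIV_neg_imp_decreasing_at_top[OF _ top])
    fix x assume "v + 1 \<le> x"
    then show "\<exists>y. (F has_real_derivative y) (at x) \<and> y < 0"
      using deriv neg[of x] by auto
  qed
  also have "F (v + 1) \<le> F v"
  proof (rule DERIV_nonpos_imp_nonincreasing[where f = F])
    fix x assume "v \<le> x"
    then have "d x \<le> 0"
      using False neg[of x] by (cases "x = v") auto
    then show "\<exists>y. (F has_real_derivative y) (at x) \<and> y \<le> 0"
      using deriv by blast
  qed simp
  finally show ?thesis .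
qed

section \<open>The standard normal distribution\<close>

lemma phi_pos: "0 < phi x"
  by (simp add: normal_density_pos)

lemma phi_eq_exp: "phi x = exp (- x\<^sup>2 / 2) / sqrt (2 * pi)"
  by (simp add: std_normal_density_def)

lemma phi_add: "phi (v + e) = exp (- e * v - e\<^sup>2 / 2) * phi v"
proof -
  have "exp (- (v + e)\<^sup>2 / 2) = exp (- e * v - e\<^sup>2 / 2) * exp (- v\<^sup>2 / 2)"
    by (simp add: exp_add[symmetric] power2_eq_square field_simps)
  then show ?thesis by (simp add: phi_eq_exp)
qed

lemma phi_le_phi_iff_sq_le: "phi b \<le> phi a \<longleftrightarrow> a\<^sup>2 \<le> b\<^sup>2"
  by (simp add: phi_eq_exp divide_le_cancel)

lemma has_real_derivative_phi: "(phi has_real_derivative - x * phi x) (at x)"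
  unfolding phi_eq_exp[abs_def]
  by (auto intro!: derivative_eq_intros simp: power2_eq_square field_simps)

lemma isCont_phi: "isCont phi x"
  using has_real_derivative_phi DERIV_isCont by blast

lemma
  shows tendsto_phi_at_bot: "(phi \<longlongrightarrow> 0) at_bot"
    and tendsto_mult_phi_at_bot: "((\<lambda>x. x * phi x) \<longlongrightarrow> 0) at_bot"
    and tendsto_phi_div_at_bot: "((\<lambda>x. phi x / (- x)) \<longlongrightarrow> 0) at_bot"
  unfolding phi_eq_exp[abs_def] by real_asymp+

lemma Phi_eq_set_integral: "Phi x = (LBINT u:{..x}. phi u)"
proof -
  have "emeasure (density lborel phi) {..x} = (\<integral>\<^sup>+u. ennreal (indicator {..x} u * phi u) \<partial>lborel)"
    by (subst emeasure_density) (auto intro!: nn_integral_cong split: split_indicator)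
  also have "\<dots> = ennreal (LBINT u:{..x}. phi u)"
    unfolding set_lebesgue_integral_def
    by (subst nn_integral_eq_integral)
       (auto intro!: integrable_mult_indicator[of "{..x}" lborel phi, simplified])
  finally show ?thesis
    by (simp add: std_normal_cdf_def measure_def set_lebesgue_integral_def integral_nonneg)
qed

lemma has_real_derivative_Phi: "(Phi has_real_derivative phi x) (at x)"
  unfolding Phi_eq_set_integral[abs_def]
  by (rule has_real_derivative_set_integral_atMost) (auto intro: isCont_phi)

lemma has_real_derivative_Phi_comp [derivative_intros]:
  "(f has_real_derivative f') (at x) \<Longrightarrow>
    ((\<lambda>x. Phi (f x)) has_real_derivative phi (f x) * f') (at x)"
  using DERIV_chain2[OF has_real_derivative_Phi] by blast

lemma has_real_derivative_phi_comp [derivative_intros]: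
  "(f has_real_derivative f') (at x) \<Longrightarrow>
    ((\<lambda>x. phi (f x)) has_real_derivative - f x * phi (f x) * f') (at x)"
  using DERIV_chain2[OF has_real_derivative_phi] by blast

lemma isCont_Phi: "isCont Phi x"
  using has_real_derivative_Phi DERIV_isCont by blast

lemma isCont_Phi_comp [continuous_intros]: "isCont f x \<Longrightarrow> isCont (\<lambda>x. Phi (f x)) x"
  by (rule isCont_o2[OF _ isCont_Phi])

lemma borel_measurable_Phi [measurable]: "Phi \<in> borel_measurable borel"
  by (intro borel_measurable_continuous_onI continuous_at_imp_continuous_on) (simp add: isCont_Phi)

interpretation std_normal: real_distribution "density lborel phi"
proof -
  interpret prob_space "density lborel phi"
    using prob_space_normal_density by simp
  show "real_distribution (density lborel phi)" by standard auto
qed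

lemma Phi_eq_cdf: "Phi = cdf (density lborel phi)"
  by (simp add: fun_eq_iff std_normal_cdf_def cdf_def)

lemma tendsto_Phi_at_bot: "(Phi \<longlongrightarrow> 0) at_bot"
  unfolding Phi_eq_cdf by (rule std_normal.cdf_lim_at_bot)

lemma tendsto_Phi_at_top: "(Phi \<longlongrightarrow> 1) at_top"
  unfolding Phi_eq_cdf by (rule std_normal.cdf_lim_at_top_prob)

lemma strict_mono_Phi: "strict_mono Phi"
  by (rule strict_monoI, rule DERIV_pos_imp_increasing)
     (use has_real_derivative_Phi phi_pos in blast)+

lemma Phi_pos: "0 < Phi x"
  by (rule DERIV_pos_imp_increasing_at_bot[OF _ tendsto_Phi_at_bot])
     (use has_real_derivative_Phi phi_pos in blast)

lemma Phi_less_1: "Phi x < 1"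
proof -
  have "Phi x < Phi (x + 1)"
    using strict_monoD[OF strict_mono_Phi] by simp
  also have "Phi (x + 1) \<le> 1"
    unfolding Phi_eq_cdf by (rule std_normal.cdf_bounded_prob)
  finally show ?thesis .
qed

lemma Phi_surj_unit_interval:
  assumes "0 < p" "p < 1"
  obtains x where "Phi x = p"
proof -
  obtain a where a: "Phi a < p"
    using order_tendstoD(2)[OF tendsto_Phi_at_bot assms(1)] by (auto simp: eventually_at_bot_linorder)
  obtain b where b: "p < Phi b"
    using order_tendstoD(1)[OF tendsto_Phi_at_top assms(2)] by (auto simp: eventually_at_top_linorder)
  have "a \<le> b"
    using a b strict_mono_less_eq[OF strict_mono_Phi, of b a] by linarith
  then have "\<exists>x\<ge>a. x \<le> b \<and> Phi x = p"
    using a b by (intro IVT) (auto intro: isCont_Phi)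
  then show ?thesis using that by blast
qed

lemma Phi_ge_mult_phi:
  assumes "x \<le> 0" "0 < d"
  shows "d * phi (x - d) \<le> Phi x"
proof -
  obtain z where z: "x - d < z" "z < x" "Phi x - Phi (x - d) = (x - (x - d)) * phi z"
    using MVT2[of "x - d" x Phi phi] assms has_real_derivative_Phi by auto
  have "(- z)\<^sup>2 \<le> (- (x - d))\<^sup>2"
    using z assms by (intro power_mono) auto
  then have "phi (x - d) \<le> phi z"
    by (simp add: phi_le_phi_iff_sq_le power2_commute[of x d])
  then have "d * phi (x - d) \<le> Phi x - Phi (x - d)"
    using z assms by simp
  then show ?thesis
    using Phi_pos[of "x - d"] by simp
qed

section \<open>Mills-ratio inequalities\<close>

lemma Phi_less_phi_div:
  assumes "x < 0"
  shows "Phi x < phi x / (- x)"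
proof -
  let ?w = "\<lambda>x. phi x / (- x) - Phi x"
  have "0 < ?w x"
  proof (rule DERIV_pos_imp_increasing_at_bot[where f = ?w])
    fix z assume "z \<le> x"
    then have z: "z < 0" using assms by simp
    have "(?w has_real_derivative phi z / z\<^sup>2) (at z)"
      using z by (auto intro!: derivative_eq_intros simp: field_simps power2_eq_square)
    then show "\<exists>d. (?w has_real_derivative d) (at z) \<and> 0 < d"
      using z phi_pos[of z] by auto
  next
    show "(?w \<longlongrightarrow> 0) at_bot"
      using tendsto_diff[OF tendsto_phi_div_at_bot tendsto_Phi_at_bot] by simp
  qed
  then show ?thesis by simp
qed

lemma tendsto_mult_Phi_at_bot: "((\<lambda>x. x * Phi x) \<longlongrightarrow> 0) at_bot"
proof (rule tendsto_sandwich[where f = "\<lambda>x. - phi x" and h = "\<lambda>x. 0"])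
  show "\<forall>\<^sub>F x in at_bot. - phi x \<le> x * Phi x"
    using eventually_gt_at_bot[of 0]
  proof eventually_elim
    case (elim x)
    then show ?case using Phi_less_phi_div[of x] by (simp add: field_simps)
  qed
  show "\<forall>\<^sub>F x in at_bot. x * Phi x \<le> 0"
    using eventually_le_at_bot[of 0]
    by eventually_elim (simp add: mult_nonpos_nonneg less_imp_le[OF Phi_pos])
  show "((\<lambda>x. - phi x) \<longlongrightarrow> 0) at_bot"
    using tendsto_minus[OF tendsto_phi_at_bot] by simp
qed simp

lemma tendsto_sq_mult_Phi_at_bot: "((\<lambda>x. x\<^sup>2 * Phi x) \<longlongrightarrow> 0) at_bot"
proof (rule tendsto_sandwich[where f = "\<lambda>x. 0" and h = "\<lambda>x. - x * phi x"])
  show "\<forall>\<^sub>F x in at_bot. x\<^sup>2 * Phi x \<le> - x * phi x"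
    using eventually_gt_at_bot[of 0]
  proof eventually_elim
    case (elim x)
    then have "(- x) * Phi x < phi x"
      using Phi_less_phi_div[of x] by (simp add: field_simps)
    then have "(- x) * ((- x) * Phi x) \<le> (- x) * phi x"
      using elim by (intro mult_left_mono) auto
    then show ?case by (simp add: power2_eq_square)
  qed
  show "\<forall>\<^sub>F x in at_bot. 0 \<le> x\<^sup>2 * Phi x"
    by (simp add: less_imp_le[OF Phi_pos])
  show "((\<lambda>x. - x * phi x) \<longlongrightarrow> 0) at_bot"
    using tendsto_minus[OF tendsto_mult_phi_at_bot] by simp
qed simp

text \<open>
  Each of the next three expressions vanishes at \<open>-\<infinity>\<close> and is increasing: its derivative is
  \<open>\<Phi>\<close>, respectively a positive multiple of the previous expression.
\<close>

lemma x_Phi_add_phi_pos: "0 < x * Phi x + phi x" (is "_ < ?f x")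
proof (rule DERIV_pos_imp_increasing_at_bot[where f = ?f])
  fix z :: real
  have "(?f has_real_derivative Phi z) (at z)"
    by (auto intro!: derivative_eq_intros)
  then show "\<exists>d. (?f has_real_derivative d) (at z) \<and> 0 < d"
    using Phi_pos by blast
next
  show "(?f \<longlongrightarrow> 0) at_bot"
    using tendsto_add[OF tendsto_mult_Phi_at_bot tendsto_phi_at_bot] by simp
qed

lemma one_add_sq_Phi_add_x_phi_pos: "0 < (1 + x\<^sup>2) * Phi x + x * phi x" (is "_ < ?f x")
proof (rule DERIV_pos_imp_increasing_at_bot[where f = ?f])
  fix z :: real
  have "(?f has_real_derivative 2 * (z * Phi z + phi z)) (at z)"
    by (auto intro!: derivative_eq_intros simp: algebra_simps power2_eq_square)
  then show "\<exists>d. (?f has_real_derivative d) (at z) \<and> 0 < d"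
    using x_Phi_add_phi_pos[of z] by auto
next
  have "((\<lambda>x. Phi x + x\<^sup>2 * Phi x + x * phi x) \<longlongrightarrow> 0 + 0 + 0) at_bot"
    by (intro tendsto_add tendsto_Phi_at_bot tendsto_sq_mult_Phi_at_bot tendsto_mult_phi_at_bot)
  then show "(?f \<longlongrightarrow> 0) at_bot"
    by (simp add: algebra_simps)
qed

lemma Phi_sq_diff_pos: "0 < (Phi x)\<^sup>2 - x * phi x * Phi x - (phi x)\<^sup>2" (is "_ < ?f x")
proof (rule DERIV_pos_imp_increasing_at_bot[where f = ?f])
  fix z :: real
  have "(?f has_real_derivative phi z * ((1 + z\<^sup>2) * Phi z + z * phi z)) (at z)"
    by (auto intro!: derivative_eq_intros simp: algebra_simps power2_eq_square)
  then show "\<exists>d. (?f has_real_derivative d) (at z) \<and> 0 < d"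
    using phi_pos[of z] one_add_sq_Phi_add_x_phi_pos[of z] by auto
next
  have "((\<lambda>x. (Phi x)\<^sup>2 - phi x * (x * Phi x) - (phi x)\<^sup>2) \<longlongrightarrow> 0\<^sup>2 - 0 * 0 - 0\<^sup>2) at_bot"
    by (intro tendsto_diff tendsto_mult tendsto_power tendsto_Phi_at_bot tendsto_phi_at_bot
        tendsto_mult_Phi_at_bot)
  then show "(?f \<longlongrightarrow> 0) at_bot"
    by (simp add: algebra_simps)
qed

lemma strict_mono_phi_div_Phi_add: "strict_mono (\<lambda>x. phi x / Phi x + x)"
  (is "strict_mono ?f")
proof (rule strict_monoI, rule DERIV_pos_imp_increasing[where f = ?f])
  fix z :: real
  have "Phi z \<noteq> 0" using Phi_pos[of z] by simp
  then have "(?f has_real_derivative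
      ((Phi z)\<^sup>2 - z * phi z * Phi z - (phi z)\<^sup>2) / (Phi z)\<^sup>2) (at z)"
    by (auto intro!: derivative_eq_intros simp: field_simps power2_eq_square)
  then show "\<exists>d. (?f has_real_derivative d) (at z) \<and> 0 < d"
    using Phi_sq_diff_pos[of z] Phi_pos[of z] by auto
qed

lemma strict_mono_Phi_div_phi: "strict_mono (\<lambda>x. Phi x / phi x)"
  (is "strict_mono ?f")
proof (rule strict_monoI, rule DERIV_pos_imp_increasing[where f = ?f])
  fix z :: real
  have "phi z \<noteq> 0" using phi_pos[of z] by simp
  then have "(?f has_real_derivative (z * Phi z + phi z) / phi z) (at z)"
    by (auto intro!: derivative_eq_intros simp: field_simps power2_eq_square)
  then show "\<exists>d. (?f has_real_derivative d) (at z) \<and> 0 < d"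
    using x_Phi_add_phi_pos[of z] phi_pos[of z] by auto
qed

text \<open>
  As \<open>(\<Phi> / \<phi>)' = 1 + x \<Phi> / \<phi>\<close>, the logarithmic derivative of \<open>\<Phi> / \<phi>\<close> is
  \<open>\<phi> / \<Phi> + x\<close>, which is strictly increasing; so \<open>\<Phi> / \<phi>\<close> is strictly log-convex and the
  following quotient is strictly decreasing in \<open>v\<close> for \<open>e > 0\<close>.
\<close>

definition mills_quot :: "real \<Rightarrow> real \<Rightarrow> real" where
  "mills_quot e v = (Phi v / phi v) / (Phi (v + e) / phi (v + e))"

lemma mills_quot_pos: "0 < mills_quot e v"
  by (simp add: mills_quot_def Phi_pos phi_pos)

lemma mills_quot_less_1:
  assumes "0 < e"
  shows "mills_quot e v < 1"
proof -
  have "0 < Phi (v + e) / phi (v + e)"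
    using Phi_pos phi_pos by simp
  moreover have "Phi v / phi v < Phi (v + e) / phi (v + e)"
    using strict_monoD[OF strict_mono_Phi_div_phi, of v "v + e"] assms by simp
  ultimately show ?thesis
    unfolding mills_quot_def by (simp only: divide_less_eq_1_pos)
qed

lemma has_real_derivative_mills_quot:
  "(mills_quot e has_real_derivative
     mills_quot e v * ((phi v / Phi v + v) - (phi (v + e) / Phi (v + e) + (v + e)))) (at v)"
proof -
  have "Phi v \<noteq> 0" "Phi (v + e) \<noteq> 0" "phi v \<noteq> 0" "phi (v + e) \<noteq> 0"
    using Phi_pos phi_pos by (metis less_irrefl)+
  then show ?thesis
    unfolding mills_quot_def[abs_def]
    by (auto intro!: derivative_eq_intros simp: field_simps power2_eq_square)
qed

lemma mills_quot_strict_antimono: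
  assumes "0 < e" "u < v"
  shows "mills_quot e v < mills_quot e u"
proof (rule DERIV_neg_imp_decreasing[where f = "mills_quot e"])
  fix z :: real
  have "phi z / Phi z + z < phi (z + e) / Phi (z + e) + (z + e)"
    using strict_monoD[OF strict_mono_phi_div_Phi_add, of z "z + e"] assms by simp
  then have "mills_quot e z * ((phi z / Phi z + z) - (phi (z + e) / Phi (z + e) + (z + e))) < 0"
    using mills_quot_pos[of e z] by (simp add: mult_pos_neg)
  then show "\<exists>d. (mills_quot e has_real_derivative d) (at z) \<and> d < 0"
    using has_real_derivative_mills_quot by blast
qed (use assms in auto)

section \<open>The standardized selective posterior\<close>

text \<open>
  Substituting \<open>\<theta> = y + \<sigma> u\<close> and writing \<open>e = (y - t) / \<sigma>\<close>, the integrand of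
  \<open>sel_post_cdf \<sigma> t y\<close> becomes \<open>post_kernel e u\<close>.
\<close>

definition post_kernel :: "real \<Rightarrow> real \<Rightarrow> real" where
  "post_kernel e u = phi u / Phi (u + e)"

definition post_mass :: "real \<Rightarrow> real \<Rightarrow> real" where
  "post_mass e v = (LBINT u:{..v}. post_kernel e u)"

definition post_norm :: "real \<Rightarrow> real" where
  "post_norm e = (LBINT u. post_kernel e u)"

lemma post_kernel_pos: "0 < post_kernel e u"
  by (simp add: post_kernel_def phi_pos Phi_pos)

lemma isCont_post_kernel: "isCont (post_kernel e) u"
  unfolding post_kernel_def[abs_def] using Phi_pos[of "u + e"]
  by (auto intro!: continuous_intros isCont_phi)

lemma borel_measurable_post_kernel [measurable]: "post_kernel e \<in> borel_measurable borel"
  unfolding post_kernel_def[abs_def] by measurable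

lemma post_kernel_antimono: "e\<^sub>1 \<le> e\<^sub>2 \<Longrightarrow> post_kernel e\<^sub>2 u \<le> post_kernel e\<^sub>1 u"
  unfolding post_kernel_def using phi_pos[of u] Phi_pos strict_mono_less_eq[OF strict_mono_Phi]
  by (intro divide_left_mono) (auto intro: less_imp_le)

lemma tendsto_post_kernel: "X \<longlonglongrightarrow> e \<Longrightarrow> (\<lambda>n. post_kernel (X n) u) \<longlonglongrightarrow> post_kernel e u"
  unfolding post_kernel_def using Phi_pos[of "u + e"]
  by (intro tendsto_intros isCont_tendsto_compose[OF isCont_Phi]) auto

text \<open>
  By the mean value theorem \<open>\<Phi> (u + e) \<ge> e / 2 * \<phi> (u + e / 2)\<close>, so the left tail of
  \<open>post_kernel e\<close> decays like \<open>exp (e u / 2)\<close>; this is where \<open>e > 0\<close> is needed.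
\<close>

lemma post_kernel_le:
  assumes "0 < e"
  shows "post_kernel e u \<le>
    indicator {..-e} u * (2 / e * exp (e\<^sup>2 / 8) * exp (e / 2 * u)) + phi u / Phi 0"
proof (cases "u \<le> -e")
  case True
  have "e / 2 * phi (u + e / 2) \<le> Phi (u + e)"
    using Phi_ge_mult_phi[of "u + e" "e / 2"] True assms by (simp add: algebra_simps)
  then have "e / 2 * exp (- (e / 2) * u - (e / 2)\<^sup>2 / 2) * phi u \<le> Phi (u + e)"
    by (simp add: phi_add mult_ac)
  then have "post_kernel e u \<le> phi u / (e / 2 * exp (- (e / 2) * u - (e / 2)\<^sup>2 / 2) * phi u)"
    unfolding post_kernel_def using assms phi_pos[of u] Phi_pos[of "u + e"]
    by (intro divide_left_mono) auto
  also have "\<dots> = 2 / e * exp (e\<^sup>2 / 8) * exp (e / 2 * u)"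
    using phi_pos[of u] assms
    by (simp add: field_simps exp_minus[symmetric] exp_add[symmetric] power2_eq_square)
  finally have "post_kernel e u \<le> 2 / e * exp (e\<^sup>2 / 8) * exp (e / 2 * u)" .
  moreover have "0 < phi u / Phi 0"
    using phi_pos Phi_pos by simp
  ultimately show ?thesis
    using True by simp
next
  case False
  then have "post_kernel e u \<le> phi u / Phi 0"
    unfolding post_kernel_def using phi_pos[of u] Phi_pos strict_mono_less_eq[OF strict_mono_Phi]
    by (intro divide_left_mono) auto
  then show ?thesis using False by simp
qed

lemma integrable_post_kernel:
  assumes "0 < e"
  shows "integrable lborel (post_kernel e)"
proof (rule Bochner_Integration.integrable_bound)
  have "set_integrable lborel {..-e} (\<lambda>u. exp (e / 2 * u))"
    using assms by (intro set_integrable_exp_atMost) auto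
  then have "integrable lborel (\<lambda>u. 2 / e * exp (e\<^sup>2 / 8) * (indicator {..-e} u * exp (e / 2 * u)))"
    unfolding set_integrable_def by simp
  then show "integrable lborel
      (\<lambda>u. indicator {..-e} u * (2 / e * exp (e\<^sup>2 / 8) * exp (e / 2 * u)) + phi u / Phi 0)"
    by (intro Bochner_Integration.integrable_add integrable_divide) (simp_all add: mult_ac)
  show "AE u in lborel. norm (post_kernel e u) \<le>
      norm (indicator {..-e} u * (2 / e * exp (e\<^sup>2 / 8) * exp (e / 2 * u)) + phi u / Phi 0)"
    using post_kernel_le[OF assms] post_kernel_pos[of e]
    by (intro AE_I2) (metis abs_ge_self abs_of_pos real_norm_def order_trans)
qed simp

lemma has_real_derivative_post_mass:
  "0 < e \<Longrightarrow> (post_mass e has_real_derivative post_kernel e v) (at v)"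
  unfolding post_mass_def[abs_def]
  by (rule has_real_derivative_set_integral_atMost)
     (auto intro: integrable_post_kernel isCont_post_kernel)

lemma tendsto_post_mass_at_top: "0 < e \<Longrightarrow> (post_mass e \<longlongrightarrow> post_norm e) at_top"
  unfolding post_mass_def[abs_def] post_norm_def
  by (intro tendsto_set_integral_atMost_at_top integrable_post_kernel)

lemma tendsto_post_mass_at_bot: "0 < e \<Longrightarrow> (post_mass e \<longlongrightarrow> 0) at_bot"
  unfolding post_mass_def[abs_def]
  by (intro tendsto_set_integral_atMost_at_bot integrable_post_kernel)

lemma post_norm_ge_1:
  assumes "0 < e"
  shows "1 \<le> post_norm e"
proof -
  have "(LBINT u. phi u) \<le> (LBINT u. post_kernel e u)"
  proof (rule integral_mono)
    show "phi u \<le> post_kernel e u" for u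
      using phi_pos[of u] Phi_pos[of "u + e"] Phi_less_1[of "u + e"]
      by (simp add: post_kernel_def field_simps)
  qed (use assms integrable_post_kernel in auto)
  then show ?thesis by (simp add: post_norm_def)
qed

lemma has_real_derivative_Phi_quot:
  "((\<lambda>v. Phi v / Phi (v + e)) has_real_derivative post_kernel e v * (1 - mills_quot e v)) (at v)"
proof -
  have "Phi v \<noteq> 0" "Phi (v + e) \<noteq> 0" "phi v \<noteq> 0"
    using Phi_pos phi_pos by (metis less_irrefl)+
  then show ?thesis
    unfolding post_kernel_def mills_quot_def
    by (auto intro!: derivative_eq_intros simp: field_simps power2_eq_square)
qed

lemma tendsto_Phi_quot_at_top: "((\<lambda>v. Phi v / Phi (v + e)) \<longlongrightarrow> 1) at_top"
proof -
  have "filterlim (\<lambda>v. v + e) at_top at_top"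
    by real_asymp
  then have "((\<lambda>v. Phi v / Phi (v + e)) \<longlongrightarrow> 1 / 1) at_top"
    by (intro tendsto_divide tendsto_Phi_at_top filterlim_compose[OF tendsto_Phi_at_top]) auto
  then show ?thesis by simp
qed

lemma tendsto_Phi_quot_at_bot:
  assumes "0 < e"
  shows "((\<lambda>v. Phi v / Phi (v + e)) \<longlongrightarrow> 0) at_bot"
proof (rule tendsto_sandwich[where f = "\<lambda>_. 0" and h = "\<lambda>v. exp (e * v + e\<^sup>2 / 2)"])
  show "\<forall>\<^sub>F v in at_bot. 0 \<le> Phi v / Phi (v + e)"
    by (simp add: Phi_pos less_imp_le)
  show "\<forall>\<^sub>F v in at_bot. Phi v / Phi (v + e) \<le> exp (e * v + e\<^sup>2 / 2)"
  proof (intro always_eventually allI)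
    fix v
    have "mills_quot e v = Phi v / Phi (v + e) * exp (- e * v - e\<^sup>2 / 2)"
      using phi_pos[of v] unfolding mills_quot_def phi_add[of v e] by (simp add: field_simps)
    then have "Phi v / Phi (v + e) = mills_quot e v * exp (e * v + e\<^sup>2 / 2)"
      by (simp add: mult.assoc exp_add[symmetric])
    also have "\<dots> \<le> exp (e * v + e\<^sup>2 / 2)"
      using mills_quot_less_1[OF assms, of v] by simp
    finally show "Phi v / Phi (v + e) \<le> exp (e * v + e\<^sup>2 / 2)" .
  qed
  show "((\<lambda>v. exp (e * v + e\<^sup>2 / 2)) \<longlongrightarrow> 0) at_bot"
    using assms by real_asymp
qed simp

text \<open>
  The difference \<open>F = post_mass e - post_norm e * \<Phi> / \<Phi> (\<cdot> + e)\<close> vanishes at \<open>\<plusminus>\<infinity>\<close>,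
  and its derivative \<open>post_kernel e * (1 - post_norm e * (1 - mills_quot e))\<close> changes sign
  at most once, from \<open>+\<close> to \<open>-\<close>, because \<open>mills_quot e\<close> is strictly decreasing.
\<close>

lemma Phi_quot_less_post_mass_div_norm:
  assumes "0 < e"
  shows "Phi v / Phi (v + e) < post_mass e v / post_norm e"
proof -
  define Z where "Z = post_norm e"
  have Z: "1 \<le> Z"
    using post_norm_ge_1[OF assms] by (simp add: Z_def)
  define F where "F v = post_mass e v - Z * (Phi v / Phi (v + e))" for v
  have "0 < F v"
  proof (rule pos_if_tendsto_0_and_deriv_single_crossing[where F = F])
    show "(F has_real_derivative post_kernel e x * (1 - Z + Z * mills_quot e x)) (at x)" for x
    proof -
      have "(F has_real_derivative post_kernel e x - Z * (post_kernel e x * (1 - mills_quot e x)))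
          (at x)"
        unfolding F_def[abs_def]
        by (intro DERIV_diff DERIV_cmult has_real_derivative_post_mass[OF assms]
            has_real_derivative_Phi_quot)
      then show ?thesis by (simp add: algebra_simps)
    qed
    show "post_kernel e y * (1 - Z + Z * mills_quot e y) < 0"
      if "x < y" "post_kernel e x * (1 - Z + Z * mills_quot e x) \<le> 0" for x y
    proof -
      have "1 - Z + Z * mills_quot e x \<le> 0"
        using that(2) post_kernel_pos[of e x] by (simp add: mult_le_0_iff)
      moreover have "Z * mills_quot e y < Z * mills_quot e x"
        using mills_quot_strict_antimono[OF assms that(1)] Z by simp
      ultimately show ?thesis
        using post_kernel_pos[of e y] by (simp add: mult_pos_neg)
    qed
    show "(F \<longlongrightarrow> 0) at_bot"
      using tendsto_diff[OF tendsto_post_mass_at_bot[OF assms]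
          tendsto_mult[OF tendsto_const[of Z] tendsto_Phi_quot_at_bot[OF assms]]]
      by (simp add: F_def[abs_def])
    show "(F \<longlongrightarrow> 0) at_top"
      using tendsto_diff[OF tendsto_post_mass_at_top[OF assms]
          tendsto_mult[OF tendsto_const[of Z] tendsto_Phi_quot_at_top]]
      by (simp add: F_def[abs_def] Z_def)
  qed
  then show ?thesis
    using Z by (simp add: F_def Z_def field_simps)
qed

lemma sel_post_cdf_eq_post_mass:
  assumes "0 < \<sigma>"
  shows "sel_post_cdf \<sigma> t y \<theta> =
    post_mass ((y - t) / \<sigma>) ((\<theta> - y) / \<sigma>) / post_norm ((y - t) / \<sigma>)"
proof -
  define e where "e = (y - t) / \<sigma>"
  define f where "f s = phi ((s - y) / \<sigma>) / sel_prob \<sigma> t s" for s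
  have f_affine: "f (y + \<sigma> * u) = post_kernel e u" for u
  proof -
    have "(y + \<sigma> * u - t) / \<sigma> = u + e"
      using assms by (simp add: e_def field_simps)
    then show ?thesis
      using assms by (simp add: f_def post_kernel_def sel_prob_def)
  qed
  have "(LBINT s:{..\<theta>}. f s) = \<sigma> * (LBINT u. indicator {..\<theta>} (y + \<sigma> * u) *\<^sub>R f (y + \<sigma> * u))"
    unfolding set_lebesgue_integral_def
    using lborel_integral_real_affine[of \<sigma> "\<lambda>s. indicator {..\<theta>} s * f s" y] assms by simp
  also have "(LBINT u. indicator {..\<theta>} (y + \<sigma> * u) *\<^sub>R f (y + \<sigma> * u)) =
      (LBINT u. indicator {..(\<theta> - y) / \<sigma>} u *\<^sub>R post_kernel e u)"
  proof (rule Bochner_Integration.integral_cong[OF refl])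
    fix u
    have "y + \<sigma> * u \<le> \<theta> \<longleftrightarrow> u \<le> (\<theta> - y) / \<sigma>"
      using assms by (simp add: field_simps)
    then show "indicator {..\<theta>} (y + \<sigma> * u) *\<^sub>R f (y + \<sigma> * u) =
        indicator {..(\<theta> - y) / \<sigma>} u *\<^sub>R post_kernel e u"
      by (simp add: f_affine indicator_def)
  qed
  finally have num: "(LBINT s:{..\<theta>}. f s) = \<sigma> * post_mass e ((\<theta> - y) / \<sigma>)"
    by (simp add: post_mass_def set_lebesgue_integral_def)
  have den: "(LBINT s. f s) = \<sigma> * post_norm e"
    using lborel_integral_real_affine[of \<sigma> f y] assms by (simp add: f_affine post_norm_def)
  show ?thesis
    unfolding sel_post_cdf_def f_def[symmetric] num den e_def using assms by simp
qed

lemma sel_post_quantile_less: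
  assumes "0 < \<sigma>" "t < y" "0 < \<alpha>" and less: "\<alpha> < sel_post_cdf \<sigma> t y \<theta>"
  shows "sel_post_quantile \<sigma> t \<alpha> y < \<theta>"
proof -
  define e where "e = (y - t) / \<sigma>"
  have e: "0 < e"
    using assms by (simp add: e_def)
  define P where "P \<theta> = sel_post_cdf \<sigma> t y \<theta>" for \<theta>
  have P_eq: "P = (\<lambda>\<theta>. post_mass e ((\<theta> - y) / \<sigma>) / post_norm e)"
    by (simp add: fun_eq_iff P_def sel_post_cdf_eq_post_mass[OF assms(1)] e_def)
  have cont: "isCont P \<theta>"
    unfolding P_eq using post_norm_ge_1[OF e] assms(1)
    by (intro continuous_intros isCont_o2[OF _ DERIV_isCont[OF has_real_derivative_post_mass[OF e]]])
       auto
  have "filterlim (\<lambda>\<theta>. (\<theta> - y) / \<sigma>) at_bot at_bot"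
    using assms(1) by real_asymp
  then have "((\<lambda>\<theta>. post_mass e ((\<theta> - y) / \<sigma>)) \<longlongrightarrow> 0) at_bot"
    by (rule filterlim_compose[OF tendsto_post_mass_at_bot[OF e]])
  then have "(P \<longlongrightarrow> 0) at_bot"
    unfolding P_eq by (rule tendsto_divide_zero)
  then obtain \<theta>\<^sub>1 where \<theta>\<^sub>1: "\<And>\<theta>. \<theta> \<le> \<theta>\<^sub>1 \<Longrightarrow> P \<theta> < \<alpha>"
    using order_tendstoD(2)[of P 0 at_bot \<alpha>] assms(3) by (auto simp: eventually_at_bot_linorder)
  have "bdd_below {\<theta>. \<alpha> \<le> P \<theta>}"
  proof (rule bdd_belowI)
    fix \<theta> assume "\<theta> \<in> {\<theta>. \<alpha> \<le> P \<theta>}"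
    then show "\<theta>\<^sub>1 \<le> \<theta>"
      using \<theta>\<^sub>1[of \<theta>] by (cases "\<theta> \<le> \<theta>\<^sub>1") auto
  qed
  moreover obtain d where "0 < d" "\<And>\<theta>'. \<theta>' \<noteq> \<theta> \<Longrightarrow> dist \<theta>' \<theta> < d \<Longrightarrow> \<alpha> < P \<theta>'"
    using order_tendstoD(1)[OF cont[unfolded isCont_def] less[folded P_def]]
    by (auto simp: eventually_at)
  then have "\<theta> - d / 2 \<in> {\<theta>. \<alpha> \<le> P \<theta>}"
    by (simp add: dist_real_def less_imp_le)
  ultimately have "sel_post_quantile \<sigma> t \<alpha> y \<le> \<theta> - d / 2"
    unfolding sel_post_quantile_def P_def[symmetric] by (rule cInf_lower[rotated])
  then show ?thesis
    using \<open>0 < d\<close> by simp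
qed

lemma tendsto_sel_post_cdf_at_right:
  assumes "0 < \<sigma>" "t < c"
  shows "((\<lambda>y. sel_post_cdf \<sigma> t y \<theta>) \<longlongrightarrow> sel_post_cdf \<sigma> t c \<theta>) (at_right c)"
proof -
  define e v where "e y = (y - t) / \<sigma>" and "v y = (\<theta> - y) / \<sigma>" for y
  have eq: "sel_post_cdf \<sigma> t y \<theta> = post_mass (e y) (v y) / post_norm (e y)" for y
    by (simp add: sel_post_cdf_eq_post_mass[OF assms(1)] e_def v_def)
  have e_c: "0 < e c"
    using assms by (simp add: e_def)
  show ?thesis
    unfolding eq
  proof (rule tendsto_at_right_sequentially[of c "c + 1"])
    fix S :: "nat \<Rightarrow> real"
    assume S: "\<And>n. c < S n" "S \<longlonglongrightarrow> c"
    have "e c \<le> e (S n)" for n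
      using S(1)[of n] assms(1) by (simp add: e_def divide_right_mono)
    then have bound: "\<bar>post_kernel (e (S n)) u\<bar> \<le> post_kernel (e c) u" for n u
      using post_kernel_antimono post_kernel_pos by (simp add: abs_of_pos)
    have lim: "(\<lambda>n. post_kernel (e (S n)) u) \<longlonglongrightarrow> post_kernel (e c) u" for u
      unfolding e_def using assms(1) by (intro tendsto_post_kernel tendsto_intros S(2)) auto
    have "(\<lambda>n. post_mass (e (S n)) (v (S n))) \<longlonglongrightarrow> post_mass (e c) (v c)"
      unfolding post_mass_def
      using integrable_post_kernel[OF e_c] bound lim assms(1)
      by (intro tendsto_set_integral_atMost_dominated) (auto simp: v_def intro!: tendsto_intros S(2))
    moreover have "(\<lambda>n. post_norm (e (S n))) \<longlonglongrightarrow> post_norm (e c)"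
      unfolding post_norm_def
      using integrable_post_kernel[OF e_c] bound lim
      by (intro integral_dominated_convergence[where w = "post_kernel (e c)"]) auto
    ultimately show "(\<lambda>n. post_mass (e (S n)) (v (S n)) / post_norm (e (S n))) \<longlonglongrightarrow>
        post_mass (e c) (v c) / post_norm (e c)"
      using post_norm_ge_1[OF e_c] by (intro tendsto_divide) auto
  qed simp
qed

section \<open>Coverage of the posterior quantile\<close>

lemma measure_normal_density_reflect:
  assumes "0 < \<sigma>" and BC: "\<And>w. \<mu> - \<sigma> * w \<in> B \<longleftrightarrow> w \<in> C"
    and [measurable]: "B \<in> sets borel" "C \<in> sets borel"
  shows "measure (density lborel (normal_density \<mu> \<sigma>)) B = measure (density lborel phi) C"
proof -
  have normal_reflect: "normal_density \<mu> \<sigma> (\<mu> - \<sigma> * w) = phi w / \<sigma>" for w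
    using assms(1) by (simp add: normal_density_def real_sqrt_mult power_mult_distrib field_simps)
  have "emeasure (density lborel (normal_density \<mu> \<sigma>)) B =
      (\<integral>\<^sup>+y. ennreal (normal_density \<mu> \<sigma> y * indicator B y) \<partial>lborel)"
    by (subst emeasure_density) (auto intro!: nn_integral_cong split: split_indicator)
  also have "\<dots> = ennreal \<bar>- \<sigma>\<bar> * (\<integral>\<^sup>+w. ennreal (normal_density \<mu> \<sigma> (\<mu> + (- \<sigma>) * w) *
      indicator B (\<mu> + (- \<sigma>) * w)) \<partial>lborel)"
    using assms(1) by (intro nn_integral_real_affine) auto
  also have "(\<integral>\<^sup>+w. ennreal (normal_density \<mu> \<sigma> (\<mu> + (- \<sigma>) * w) * indicator B (\<mu> + (- \<sigma>) * w))
      \<partial>lborel) = (\<integral>\<^sup>+w. ennreal (1 / \<sigma>) * ennreal (phi w * indicator C w) \<partial>lborel)"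
    using assms(1)
    by (intro nn_integral_cong) (simp add: normal_reflect BC indicator_def ennreal_mult[symmetric])
  also have "\<dots> = ennreal (1 / \<sigma>) * (\<integral>\<^sup>+w. ennreal (phi w * indicator C w) \<partial>lborel)"
    by (rule nn_integral_cmult) auto
  also have "(\<integral>\<^sup>+w. ennreal (phi w * indicator C w) \<partial>lborel) = emeasure (density lborel phi) C"
    by (subst emeasure_density) (auto intro!: nn_integral_cong split: split_indicator)
  finally have "emeasure (density lborel (normal_density \<mu> \<sigma>)) B = emeasure (density lborel phi) C"
    using assms(1) by (simp add: ennreal_mult[symmetric] mult.assoc[symmetric])
  then show ?thesis
    by (simp add: measure_def)
qed

lemma measure_normal_density_atLeast:
  assumes "0 < \<sigma>"
  shows "measure (density lborel (normal_density \<mu> \<sigma>)) {y. a \<le> y} = Phi ((\<mu> - a) / \<sigma>)"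
proof -
  have "measure (density lborel (normal_density \<mu> \<sigma>)) {y. a \<le> y} =
      measure (density lborel phi) {..(\<mu> - a) / \<sigma>}"
    using assms by (intro measure_normal_density_reflect) (auto simp: field_simps)
  then show ?thesis by (simp add: std_normal_cdf_def)
qed

lemma measure_normal_density_greaterThan:
  assumes "0 < \<sigma>"
  shows "measure (density lborel (normal_density \<mu> \<sigma>)) {y. a < y} = Phi ((\<mu> - a) / \<sigma>)"
proof -
  have "measure (density lborel (normal_density \<mu> \<sigma>)) {y. a < y} =
      measure (density lborel phi) {..<(\<mu> - a) / \<sigma>}"
    using assms by (intro measure_normal_density_reflect) (auto simp: field_simps)
  also have "\<dots> = measure (density lborel phi) {..(\<mu> - a) / \<sigma>}"
  proof -
    have "emeasure (density lborel phi) {..<(\<mu> - a) / \<sigma>} =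
        emeasure (density lborel phi) {..(\<mu> - a) / \<sigma>}"
      using AE_lborel_singleton[of "(\<mu> - a) / \<sigma>"]
      by (simp add: emeasure_density, intro nn_integral_cong_AE)
         (auto elim!: eventually_mono split: split_indicator)
    then show ?thesis by (simp add: measure_def)
  qed
  finally show ?thesis by (simp add: std_normal_cdf_def)
qed

lemma sel_post_cdf_gt_below_threshold:
  assumes "0 < \<sigma>" "0 < \<alpha>" "\<alpha> < 1"
  obtains b where "Phi ((\<theta>\<^sub>0 - b) / \<sigma>) < \<alpha> * Phi ((\<theta>\<^sub>0 - t) / \<sigma>)"
    and "\<And>y. t < y \<Longrightarrow> y < b \<Longrightarrow> \<alpha> < sel_post_cdf \<sigma> t y \<theta>\<^sub>0"
proof -
  define \<beta> where "\<beta> = (\<theta>\<^sub>0 - t) / \<sigma>"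
  have "\<alpha> * Phi \<beta> < 1 * 1"
    using assms Phi_pos[of \<beta>] Phi_less_1[of \<beta>] by (intro mult_strict_mono) auto
  then obtain x where x: "Phi x = \<alpha> * Phi \<beta>"
    using Phi_surj_unit_interval[of "\<alpha> * Phi \<beta>"] assms(2) Phi_pos[of \<beta>] by auto
  define c where "c = \<theta>\<^sub>0 - \<sigma> * x"
  have "Phi x < Phi \<beta>"
    using x assms Phi_pos[of \<beta>] by simp
  then have "t < c"
    using strict_mono_less[OF strict_mono_Phi] assms(1) by (simp add: c_def \<beta>_def field_simps)
  have below: "\<alpha> < sel_post_cdf \<sigma> t y \<theta>\<^sub>0" if "t < y" "y \<le> c" for y
  proof -
    define e v where "e = (y - t) / \<sigma>" and "v = (\<theta>\<^sub>0 - y) / \<sigma>"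
    have "0 < e"
      using that assms(1) by (simp add: e_def)
    have "v + e = \<beta>"
      using assms(1) by (simp add: v_def e_def \<beta>_def field_simps)
    have "x \<le> v"
      using that(2) assms(1) by (simp add: v_def c_def field_simps)
    then have "\<alpha> * Phi \<beta> \<le> Phi v"
      using x strict_mono_less_eq[OF strict_mono_Phi] by metis
    then have "\<alpha> \<le> Phi v / Phi \<beta>"
      using Phi_pos[of \<beta>] by (simp add: field_simps)
    also have "\<dots> < post_mass e v / post_norm e"
      using Phi_quot_less_post_mass_div_norm[OF \<open>0 < e\<close>, of v] \<open>v + e = \<beta>\<close> by simp
    also have "\<dots> = sel_post_cdf \<sigma> t y \<theta>\<^sub>0"
      by (simp add: sel_post_cdf_eq_post_mass[OF assms(1)] e_def v_def)
    finally show ?thesis .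
  qed
  have "\<forall>\<^sub>F y in at_right c. \<alpha> < sel_post_cdf \<sigma> t y \<theta>\<^sub>0"
    using order_tendstoD(1)[OF tendsto_sel_post_cdf_at_right[OF assms(1) \<open>t < c\<close>]]
      below[OF \<open>t < c\<close> order_refl] by blast
  then obtain b where "c < b" and above: "\<And>y. c < y \<Longrightarrow> y < b \<Longrightarrow> \<alpha> < sel_post_cdf \<sigma> t y \<theta>\<^sub>0"
    by (auto simp: eventually_at_right_field)
  show ?thesis
  proof (rule that)
    have "(\<theta>\<^sub>0 - b) / \<sigma> < x"
      using \<open>c < b\<close> assms(1) by (simp add: c_def field_simps)
    then show "Phi ((\<theta>\<^sub>0 - b) / \<sigma>) < \<alpha> * Phi ((\<theta>\<^sub>0 - t) / \<sigma>)"
      using strict_monoD[OF strict_mono_Phi] x unfolding \<beta>_def by metis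
    show "\<alpha> < sel_post_cdf \<sigma> t y \<theta>\<^sub>0" if "t < y" "y < b" for y
      using below above that by (cases "y \<le> c") auto
  qed
qed

theorem proposition1:
  fixes \<sigma> t \<alpha> \<theta>\<^sub>0 :: real
  assumes "\<sigma> > 0" and "0 < \<alpha>" and "\<alpha> < 1"
  shows "measure (density lborel (normal_density \<theta>\<^sub>0 \<sigma>))
            {y. t < y \<and> \<theta>\<^sub>0 \<le> sel_post_quantile \<sigma> t \<alpha> y}
         / measure (density lborel (normal_density \<theta>\<^sub>0 \<sigma>)) {y. t < y} < \<alpha>"
proof -
  let ?N = "density lborel (normal_density \<theta>\<^sub>0 \<sigma>)"
  interpret prob_space ?N
    using assms(1) by (rule prob_space_normal_density)
  obtain b where b: "Phi ((\<theta>\<^sub>0 - b) / \<sigma>) < \<alpha> * Phi ((\<theta>\<^sub>0 - t) / \<sigma>)"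
    and post_gt: "\<And>y. t < y \<Longrightarrow> y < b \<Longrightarrow> \<alpha> < sel_post_cdf \<sigma> t y \<theta>\<^sub>0"
    using sel_post_cdf_gt_below_threshold[OF assms] by blast
  have "{y. t < y \<and> \<theta>\<^sub>0 \<le> sel_post_quantile \<sigma> t \<alpha> y} \<subseteq> {y. b \<le> y}"
    using sel_post_quantile_less[OF assms(1) _ assms(2) post_gt] by force
  then have "measure ?N {y. t < y \<and> \<theta>\<^sub>0 \<le> sel_post_quantile \<sigma> t \<alpha> y} \<le> measure ?N {y. b \<le> y}"
    by (intro finite_measure_mono) auto
  also have "\<dots> < \<alpha> * measure ?N {y. t < y}"
    using b assms(1) by (simp add: measure_normal_density_atLeast measure_normal_density_greaterThan)
  finally show ?thesis
    using Phi_pos assms(1) by (simp add: measure_normal_density_greaterThan divide_less_eq)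
qed

end
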